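(* There is an absolute constant $c>0$ such that the following holds. Let $n\ge2$, let $\varepsilon\in[0,\frac{1}{2\ln n}]$, and let $P\subset\mathbb{H}^2$ be a set of $n$ points equally spaced (i.e., consecutive points subtending equal angles $2\pi/n$ at the centre) on a hyperbolic circle of radius $3\ln n$. Then every $(2+\varepsilon)$-spanner for $P$, i.e., every geometric graph $G$ with vertex set $P$ satisfying $\mathrm{dist}_G(u,v)\le(2+\varepsilon)|uv|$ for all $u,v\in P$, has at least $c\, n\log n$ edges.
   Context: $\mathbb{H}^2$ is the hyperbolic plane of curvature $-1$, $|uv|$ hyperbolic distance. A geometric graph has each edge weighted by the distance between its endpoints; $\mathrm{dist}_G$ is shortest-path length in $G$. *)

theory Defs
  imports "HOL-Analysis.Analysis"
begin

text \<open>Hyperbolic plane of curvature -1, modelled as the Poincare disk.\<close>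
definition hdisk :: "complex set" where
  "hdisk = {z. norm z < 1}"

definition hdist :: "complex \<Rightarrow> complex \<Rightarrow> real" where
  "hdist u v = arcosh (1 + 2 * (norm (u - v))^2 / ((1 - (norm u)^2) * (1 - (norm v)^2)))"

definition is_walk :: "complex set set \<Rightarrow> complex list \<Rightarrow> bool" where
  "is_walk E xs \<longleftrightarrow> xs \<noteq> [] \<and> (\<forall>i. Suc i < length xs \<longrightarrow> {xs ! i, xs ! Suc i} \<in> E)"

definition walk_length :: "complex list \<Rightarrow> real" where
  "walk_length xs = (\<Sum>i<length xs - 1. hdist (xs ! i) (xs ! Suc i))"

definition is_spanner :: "real \<Rightarrow> complex set \<Rightarrow> complex set set \<Rightarrow> bool" where
  "is_spanner t P E \<longleftrightarrow>
     (\<forall>e\<in>E. \<exists>u v. e = {u, v} \<and> u \<in> P \<and> v \<in> P \<and> u \<noteq> v) \<and>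
     (\<forall>u\<in>P. \<forall>v\<in>P. \<exists>xs. is_walk E xs \<and> hd xs = u \<and> last xs = v \<and>
                          walk_length xs \<le> t * hdist u v)"

end

theory Submission
  imports Defs
begin

text \<open>
  Index the points as \<open>p\<^sub>0, ..., p\<^sub>n\<^sub>-\<^sub>1\<close> and let \<open>g(i,j)\<close> be the cyclic distance of the
  indices. By the hyperbolic law of cosines, with \<open>sinh R \<approx> n\<^sup>3/2\<close> for the radius
  \<open>R = 3 ln n\<close>, \<open>exp |p\<^sub>i p\<^sub>j|\<close> equals \<open>n\<^sup>4 g(i,j)\<^sup>2\<close> up to a constant factor.
  So every edge has length at least \<open>ln (n\<^sup>4/8)\<close>, while for \<open>g(i,j)\<^sup>2 \<le> n\<close> the
  budget \<open>(2 + \<epsilon>) |p\<^sub>i p\<^sub>j|\<close> is at most \<open>2 ln (18 n\<^sup>4 g\<^sup>2) + 3\<close>, because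
  \<open>\<epsilon> \<le> 1/(2 ln n)\<close>. Hence a \<open>(2 + \<epsilon>)\<close>-path between such points has at most
  two edges, and if it has two, its middle vertex \<open>p\<^sub>w\<close> satisfies
  \<open>g(i,w) g(w,j) = O(g(i,j)\<^sup>2)\<close>, i.e. it stays close to \<open>p\<^sub>i\<close>.

  Now cut a block of \<open>256h\<close> consecutive indices (with \<open>4h\<^sup>2 \<le> n\<close>) into two halves.
  If some index among the last \<open>h\<close> of the lower half and some index among the first
  \<open>h\<close> of the upper half both had no edge into the opposite half, the short path
  between them would give a contradiction. So at least \<open>h\<close> edges cross the middle
  of the block. Doing this for the dyadic blocks of length \<open>2\<^sup>j\<^sup>+\<^sup>1\<close>,
  \<open>7 \<le> j \<le> log\<^sub>4 n\<close>, yields disjoint sets of at least \<open>n/512\<close> edges per level,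
  hence \<open>\<Omega>(n log n)\<close> edges.
\<close>

lemma sin_ge_third:
  fixes x :: real assumes "0 \<le> x" "x \<le> 2" shows "x / 3 \<le> sin x"
proof -
  have "\<bar>sin x - (\<Sum>m<3. sin_coeff m * x ^ m)\<bar> \<le> inverse (fact 3) * \<bar>x\<bar> ^ 3"
    by (rule Maclaurin_sin_bound)
  moreover have "(\<Sum>m<3. sin_coeff m * x ^ m) = x"
    by (simp add: numeral_3_eq_3 sin_coeff_def)
  moreover have "inverse (fact 3) * \<bar>x\<bar> ^ 3 = x * x\<^sup>2 / 6"
    using assms by (simp add: fact_numeral power3_eq_cube power2_eq_square field_simps)
  moreover have "x\<^sup>2 \<le> 2\<^sup>2"
    using assms by (intro power_mono) auto
  then have "x * x\<^sup>2 \<le> x * 4"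
    using assms by (intro mult_left_mono) auto
  ultimately show ?thesis by linarith
qed

lemma sin_pi_mult_bounds:
  fixes x :: real assumes "0 \<le> x" "x \<le> 1 / 2"
  shows "x \<le> sin (pi * x)" "sin (pi * x) \<le> 4 * x"
proof -
  have "pi * x \<le> 4 * (1 / 2)" using assms pi_less_4 by (intro mult_mono) auto
  moreover have "3 * x \<le> pi * x" using assms pi_gt3 by (intro mult_right_mono) auto
  ultimately show "x \<le> sin (pi * x)" using sin_ge_third[of "pi * x"] assms by simp
  have "pi * x \<le> 4 * x" using assms pi_less_4 by (intro mult_right_mono) auto
  then show "sin (pi * x) \<le> 4 * x" using sin_x_le_x[of "pi * x"] assms by simp
qed

lemma exp_arcosh_bounds:
  fixes y :: real assumes "1 \<le> y" shows "y \<le> exp (arcosh y)" "exp (arcosh y) \<le> 2 * y"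
proof -
  have "sqrt (y\<^sup>2 - 1) \<le> sqrt (y\<^sup>2)" by (rule real_sqrt_le_mono) simp
  then have "0 \<le> sqrt (y\<^sup>2 - 1)" "sqrt (y\<^sup>2 - 1) \<le> y" using assms by auto
  moreover have "exp (arcosh y) = y + sqrt (y\<^sup>2 - 1)"
    using assms calculation by (simp add: arcosh_real_def add_pos_nonneg)
  ultimately show "y \<le> exp (arcosh y)" "exp (arcosh y) \<le> 2 * y" by auto
qed

lemma exp_3_le_27: "exp (3 :: real) \<le> 27"
proof -
  have "exp (3 :: real) = exp 1 ^ 3" using exp_of_nat_mult[of 3 "1 :: real"] by simp
  also have "\<dots> \<le> 3 ^ 3" using e_less_272 by (intro power_mono) auto
  finally show ?thesis by simp
qed

lemma factor_le_of_mult_le: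
  fixes a b k :: nat
  assumes "a \<le> k + b" "a * b \<le> 750 * k\<^sup>2"
  shows "a \<le> 30 * k"
proof (rule ccontr)
  assume "\<not> a \<le> 30 * k"
  then have "(30 * k + 1) * (29 * k + 1) \<le> a * b"
    using assms(1) by (intro mult_le_mono) auto
  moreover have "750 * k\<^sup>2 < (30 * k + 1) * (29 * k + 1)"
    by (simp add: power2_eq_square algebra_simps)
  ultimately show False using assms(2) by simp
qed

section \<open>Hyperbolic distance between points of a circle\<close>

lemma norm_cis_diff_sq: "(cmod (cis a - cis b))\<^sup>2 = 4 * (sin ((a - b) / 2))\<^sup>2"
proof -
  have "(cmod (cis a - cis b))\<^sup>2 = (cos a - cos b)\<^sup>2 + (sin a - sin b)\<^sup>2"
    by (simp add: cmod_power2)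
  also have "\<dots> = 2 - 2 * cos (a - b)"
    by (simp add: cos_diff power2_eq_square algebra_simps)
  also have "cos (a - b) = cos (2 * ((a - b) / 2))"
    by (rule arg_cong[where f = cos]) simp
  also have "\<dots> = 1 - 2 * (sin ((a - b) / 2))\<^sup>2"
    by (rule cos_double_sin)
  finally show ?thesis by simp
qed

lemma hdist_self [simp]: "hdist u u = 0"
  unfolding hdist_def by simp

lemma sinh_hdist_0_sq:
  fixes r :: real assumes "0 \<le> r" "r < 1"
  shows "(sinh (hdist 0 r))\<^sup>2 = 4 * r\<^sup>2 / (1 - r\<^sup>2)\<^sup>2"
proof -
  define q where "q = 1 - r\<^sup>2"
  have q: "0 < q" unfolding q_def using assms by (simp add: abs_square_less_1)
  define c where "c = 1 + 2 * r\<^sup>2 / q"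
  have "1 \<le> c" unfolding c_def using q by simp
  moreover have "hdist 0 r = arcosh c" unfolding hdist_def c_def q_def by simp
  ultimately have "(sinh (hdist 0 r))\<^sup>2 = c\<^sup>2 - 1" by (simp add: sinh_arcosh_real)
  also have "\<dots> = 4 * r\<^sup>2 * (r\<^sup>2 + q) / q\<^sup>2"
    unfolding c_def using q by (simp add: field_simps power2_eq_square)
  finally show ?thesis unfolding q_def by simp
qed

text \<open>The hyperbolic law of cosines for an isosceles triangle with apex at the centre.\<close>
lemma hdist_on_circle:
  assumes "0 \<le> r" "r < 1"
  shows "hdist (complex_of_real r * cis a) (complex_of_real r * cis b)
       = arcosh (1 + 2 * (sinh (hdist 0 r))\<^sup>2 * (sin ((a - b) / 2))\<^sup>2)"
proof -
  have "cmod (complex_of_real r * cis a - complex_of_real r * cis b) = r * cmod (cis a - cis b)"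
    using assms by (simp add: right_diff_distrib[symmetric] norm_mult)
  then have "(cmod (complex_of_real r * cis a - complex_of_real r * cis b))\<^sup>2
           = r\<^sup>2 * (4 * (sin ((a - b) / 2))\<^sup>2)"
    by (simp add: power_mult_distrib norm_cis_diff_sq)
  moreover have "cmod (complex_of_real r * cis a) = r" "cmod (complex_of_real r * cis b) = r"
    using assms by (simp_all add: norm_mult)
  ultimately show ?thesis
    unfolding sinh_hdist_0_sq[OF assms] unfolding hdist_def
    by (simp add: power2_eq_square mult_ac)
qed

section \<open>Cyclic distance of indices\<close>

definition cyclic_dist :: "nat \<Rightarrow> nat \<Rightarrow> nat \<Rightarrow> nat" where
  "cyclic_dist n i j = nat (min \<bar>int i - int j\<bar> (int n - \<bar>int i - int j\<bar>))"

lemma of_nat_cyclic_dist: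
  assumes "i < n" "j < n"
  shows "int (cyclic_dist n i j) = min \<bar>int i - int j\<bar> (int n - \<bar>int i - int j\<bar>)"
  unfolding cyclic_dist_def using assms by (simp add: min_def abs_if)

lemma cyclic_dist_commute: "cyclic_dist n i j = cyclic_dist n j i"
  unfolding cyclic_dist_def by (simp add: abs_minus_commute)

lemma cyclic_dist_le_half: "i < n \<Longrightarrow> j < n \<Longrightarrow> 2 * cyclic_dist n i j \<le> n"
  using of_nat_cyclic_dist[of i n j] by (auto simp: min_def split: if_splits)

lemma cyclic_dist_pos: "i < n \<Longrightarrow> j < n \<Longrightarrow> i \<noteq> j \<Longrightarrow> 0 < cyclic_dist n i j"
  using of_nat_cyclic_dist[of i n j] by (simp add: min_def abs_if split: if_splits)

lemma cyclic_dist_triangle: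
  assumes "i < n" "j < n" "k < n"
  shows "cyclic_dist n i k \<le> cyclic_dist n i j + cyclic_dist n j k"
proof -
  have "int (cyclic_dist n i k) \<le> int (cyclic_dist n i j) + int (cyclic_dist n j k)"
    using assms unfolding of_nat_cyclic_dist[OF assms(1,3)] of_nat_cyclic_dist[OF assms(1,2)]
      of_nat_cyclic_dist[OF assms(2,3)]
    by (simp add: min_def abs_if split: if_splits)
  then show ?thesis by linarith
qed

lemma cyclic_dist_eq_diff: "i \<le> j \<Longrightarrow> 2 * (j - i) \<le> n \<Longrightarrow> j < n \<Longrightarrow> cyclic_dist n i j = j - i"
  using of_nat_cyclic_dist[of i n j] by (auto simp: min_def split: if_splits)

lemma cyclic_dist_less_no_wrap:
  assumes "w < n" "m \<le> x" "x + m \<le> n" "cyclic_dist n x w < m"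
  shows "x < w + m" "w < x + m"
  using assms of_nat_cyclic_dist[of x n w] by (simp_all add: min_def abs_if split: if_splits)

lemma sin_sq_cyclic_dist:
  assumes "i < n" "j < n"
  shows "(sin (pi * (real i - real j) / real n))\<^sup>2 = (sin (pi * (real (cyclic_dist n i j) / real n)))\<^sup>2"
proof -
  define d where "d = \<bar>real i - real j\<bar>"
  have "(sin (pi * (real i - real j) / real n))\<^sup>2 = (sin (pi * (d / real n)))\<^sup>2"
  proof (cases "real i \<le> real j")
    case True
    have "pi * (real i - real j) / real n = - (pi * (d / real n))"
      unfolding d_def using True assms by (simp add: field_simps)
    then show ?thesis by simp
  qed (simp add: d_def)
  moreover have "pi * ((real n - d) / real n) = pi - pi * (d / real n)"
    using assms by (simp add: field_simps)
  then have "sin (pi * ((real n - d) / real n)) = sin (pi * (d / real n))"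
    by simp
  moreover have "real (cyclic_dist n i j) = min d (real n - d)"
    using arg_cong[OF of_nat_cyclic_dist[OF assms], of real_of_int] unfolding d_def by simp
  then have "real (cyclic_dist n i j) = d \<or> real (cyclic_dist n i j) = real n - d"
    by (simp add: min_def)
  ultimately show ?thesis by auto
qed

lemma sin_sq_cyclic_dist_bounds:
  assumes "i < n" "j < n"
  defines "x \<equiv> real (cyclic_dist n i j) / real n"
  shows "x\<^sup>2 \<le> (sin (pi * (real i - real j) / real n))\<^sup>2"
    and "(sin (pi * (real i - real j) / real n))\<^sup>2 \<le> 16 * x\<^sup>2"
proof -
  have "real (2 * cyclic_dist n i j) \<le> real n"
    using cyclic_dist_le_half[OF assms(1,2)] by (simp only: of_nat_le_iff)
  then have "0 \<le> x" "x \<le> 1 / 2"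
    unfolding x_def using assms(1) by (auto simp: field_simps)
  note b = sin_pi_mult_bounds[OF this]
  show "x\<^sup>2 \<le> (sin (pi * (real i - real j) / real n))\<^sup>2"
    unfolding sin_sq_cyclic_dist[OF assms(1,2)] x_def[symmetric] using b \<open>0 \<le> x\<close> by (intro power_mono)
  have "(sin (pi * x))\<^sup>2 \<le> (4 * x)\<^sup>2"
    using b \<open>0 \<le> x\<close> by (intro power_mono) auto
  then show "(sin (pi * (real i - real j) / real n))\<^sup>2 \<le> 16 * x\<^sup>2"
    unfolding sin_sq_cyclic_dist[OF assms(1,2)] x_def[symmetric] by (simp add: power_mult_distrib)
qed

section \<open>Dyadic blocks\<close>

lemma div_double_block:
  fixes x q t :: nat
  assumes "t * (2 * q) \<le> x" "x < t * (2 * q) + 2 * q"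
  shows "x div (2 * q) = t" "x div q = (if x < t * (2 * q) + q then 2 * t else 2 * t + 1)"
  using assms by (auto intro!: div_nat_eqI simp: algebra_simps)

lemma div_power2_eq_mono:
  fixes a b :: nat
  assumes "a div 2 ^ k = b div 2 ^ k" "k \<le> m"
  shows "a div 2 ^ m = b div 2 ^ m"
proof -
  have "(2::nat) ^ m = 2 ^ k * 2 ^ (m - k)" using assms(2) by (simp flip: power_add)
  then show ?thesis using assms(1) by (simp add: div_mult2_eq)
qed

lemma dyadic_split_level_unique:
  fixes x z :: nat
  assumes "x div 2 ^ (j + 1) = z div 2 ^ (j + 1)" "x div 2 ^ j \<noteq> z div 2 ^ j"
    and "x div 2 ^ (j' + 1) = z div 2 ^ (j' + 1)" "x div 2 ^ j' \<noteq> z div 2 ^ j'"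
  shows "j = j'"
  using div_power2_eq_mono[OF assms(1), of j'] div_power2_eq_mono[OF assms(3), of j] assms(2,4)
  by (cases j j' rule: linorder_cases) auto

lemma le_twice_div_mult:
  fixes n q :: nat
  assumes "0 < q" "q \<le> n"
  shows "n \<le> 2 * (n div q * q)"
proof -
  have "n < n div q * q + q"
    using div_mult_mod_eq[of n q] mod_less_divisor[OF assms(1), of n] by linarith
  moreover have "1 \<le> n div q" using div_le_mono[OF assms(2), of q] assms(1) by simp
  then have "q \<le> n div q * q" by simp
  ultimately show ?thesis by linarith
qed

lemma power2_eq_128_mult: "7 \<le> j \<Longrightarrow> (2::nat) ^ j = 128 * 2 ^ (j - 7)"
  using power_add[of "2::nat" "j - 7" 7] by simp

lemma le_512_mult_div_power2:
  fixes n j :: nat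
  assumes "7 \<le> j" "2 ^ (j + 1) \<le> n"
  shows "n \<le> 512 * (n div 2 ^ (j + 1) * 2 ^ (j - 7))"
  using le_twice_div_mult[OF _ assms(2)] power2_eq_128_mult[OF assms(1)] by simp

section \<open>Walks in spanners\<close>

lemma spanner_edge:
  assumes "is_spanner t P E" "{a, b} \<in> E"
  shows "a \<in> P" "b \<in> P" "a \<noteq> b"
  using assms unfolding is_spanner_def by (auto simp: doubleton_eq_iff)

lemma finite_spanner_edges:
  assumes "is_spanner t P E" "finite P"
  shows "finite E"
proof -
  have "\<forall>e\<in>E. \<exists>u v. e = {u, v} \<and> u \<in> P \<and> v \<in> P \<and> u \<noteq> v"
    using assms(1) unfolding is_spanner_def by (rule conjunct1)
  then have "E \<subseteq> Pow P" by auto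
  then show ?thesis using assms(2) by (simp add: finite_subset)
qed

lemma spanner_walk:
  assumes "is_spanner t P E" "u \<in> P" "v \<in> P"
  obtains xs where "is_walk E xs" "hd xs = u" "last xs = v" "walk_length xs \<le> t * hdist u v"
proof -
  have "\<forall>u\<in>P. \<forall>v\<in>P. \<exists>xs. is_walk E xs \<and> hd xs = u \<and> last xs = v \<and> walk_length xs \<le> t * hdist u v"
    using assms(1) unfolding is_spanner_def by (rule conjunct2)
  then show thesis using assms(2,3) that by blast
qed

lemma walk_length_ge:
  assumes "is_walk E xs" "\<And>u v. {u, v} \<in> E \<Longrightarrow> \<delta> \<le> hdist u v"
  shows "real (length xs - 1) * \<delta> \<le> walk_length xs"
proof -
  have "real (length xs - 1) * \<delta> = (\<Sum>i<length xs - 1. \<delta>)" by simp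
  also have "\<dots> \<le> walk_length xs"
    unfolding walk_length_def using assms unfolding is_walk_def by (intro sum_mono) auto
  finally show ?thesis .
qed

lemma walk_cases:
  assumes "is_walk E xs" "hd xs = u" "last xs = v" "u \<noteq> v"
  obtains "{u, v} \<in> E"
    | w where "{u, w} \<in> E" "{w, v} \<in> E" "walk_length xs = hdist u w + hdist w v"
    | "4 \<le> length xs"
proof -
  have ne: "xs \<noteq> []" and step: "\<And>i. Suc i < length xs \<Longrightarrow> {xs ! i, xs ! Suc i} \<in> E"
    using assms(1) unfolding is_walk_def by auto
  have first: "xs ! 0 = u" and final: "xs ! (length xs - 1) = v"
    using assms(2,3) ne by (simp_all add: hd_conv_nth last_conv_nth)
  then have "length xs \<noteq> 1" using assms(4) by auto
  moreover have "length xs \<noteq> 0" using ne by simp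
  ultimately have "2 \<le> length xs" by linarith
  then consider "length xs = 2" | "length xs = 3" | "4 \<le> length xs"
    by linarith
  then show thesis
  proof cases
    case 1
    have "{xs ! 0, xs ! 1} \<in> E" using step[of 0] 1 by simp
    moreover have "xs ! 1 = v" using final 1 by simp
    ultimately show thesis using first by (intro that(1)) simp
  next
    case 2
    have "{xs ! 0, xs ! 1} \<in> E" "{xs ! 1, xs ! 2} \<in> E"
      using step[of 0] step[of 1] 2 by (simp_all add: numeral_2_eq_2)
    moreover have "xs ! 2 = v" using final 2 by simp
    moreover have "walk_length xs = hdist (xs ! 0) (xs ! 1) + hdist (xs ! 1) (xs ! 2)"
      using 2 by (simp add: walk_length_def numeral_2_eq_2)
    ultimately show thesis using first by (intro that(2)) simp_all
  qed (rule that(3))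
qed

lemma spanner_edges_nonempty:
  assumes "is_spanner t P E" "u \<in> P" "v \<in> P" "u \<noteq> v"
  shows "E \<noteq> {}"
proof -
  obtain xs where "is_walk E xs" "hd xs = u" "last xs = v"
    using spanner_walk[OF assms(1-3)] .
  then show ?thesis
    using assms(4)
  proof (cases rule: walk_cases)
    case 3
    then have "Suc 0 < length xs" by simp
    with \<open>is_walk E xs\<close> have "{xs ! 0, xs ! Suc 0} \<in> E" unfolding is_walk_def by blast
    then show ?thesis by blast
  qed auto
qed

section \<open>Equally spaced points on a circle of radius 3 ln n\<close>

locale circle_points =
  fixes n :: nat and r \<alpha> :: real
  assumes two_le_n: "2 \<le> n" and r_nonneg: "0 \<le> r" and r_less_1: "r < 1"
    and hyperbolic_radius: "hdist 0 (complex_of_real r) = 3 * ln (real n)"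
begin

definition point :: "nat \<Rightarrow> complex" where
  "point k = complex_of_real r * cis (\<alpha> + 2 * pi * real k / real n)"

lemma sinh_radius_bounds:
  "real n ^ 3 / 4 \<le> sinh (hdist 0 r)" "sinh (hdist 0 r) \<le> real n ^ 3 / 2"
proof -
  define N where "N = real n ^ 3"
  have "2 ^ 3 \<le> N" unfolding N_def using two_le_n by (intro power_mono) auto
  then have N: "8 \<le> N" by simp
  have "hdist 0 r = ln N"
    unfolding hyperbolic_radius N_def using two_le_n by (simp add: ln_realpow)
  then have "sinh (hdist 0 r) = (N - 1 / N) / 2"
    using N by (simp add: sinh_ln_real inverse_eq_divide)
  moreover have "8 * 8 \<le> N * N" using N by (intro mult_mono) auto
  then have "1 / N \<le> N / 2" using N by (simp add: field_simps)
  ultimately show "real n ^ 3 / 4 \<le> sinh (hdist 0 r)" "sinh (hdist 0 r) \<le> real n ^ 3 / 2"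
    using N unfolding N_def by auto
qed

lemma hdist_point:
  "hdist (point i) (point j)
     = arcosh (1 + 2 * (sinh (hdist 0 r))\<^sup>2 * (sin (pi * (real i - real j) / real n))\<^sup>2)"
proof -
  have "((\<alpha> + 2 * pi * real i / real n) - (\<alpha> + 2 * pi * real j / real n)) / 2
      = pi * (real i - real j) / real n"
    using two_le_n by (simp add: field_simps)
  then show ?thesis unfolding point_def hdist_on_circle[OF r_nonneg r_less_1] by simp
qed

lemma exp_hdist_point_bounds:
  assumes "i < n" "j < n"
  defines "g \<equiv> real (cyclic_dist n i j)"
  shows "real n ^ 4 * g\<^sup>2 / 8 \<le> exp (hdist (point i) (point j))"
    and "exp (hdist (point i) (point j)) \<le> 2 + 16 * real n ^ 4 * g\<^sup>2"
proof -
  define S where "S = (sinh (hdist 0 r))\<^sup>2"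
  define s where "s = (sin (pi * (real i - real j) / real n))\<^sup>2"
  define y where "y = 1 + 2 * S * s"
  have n: "0 < real n" using two_le_n by simp
  have "0 \<le> hdist 0 r" unfolding hyperbolic_radius using two_le_n by simp
  then have "(real n ^ 3 / 4)\<^sup>2 \<le> S" "S \<le> (real n ^ 3 / 2)\<^sup>2"
    unfolding S_def using sinh_radius_bounds by (auto intro!: power_mono)
  then have S: "real n ^ 6 / 16 \<le> S" "S \<le> real n ^ 6 / 4"
    by (simp_all add: power_divide flip: power_mult)
  have s: "(g / real n)\<^sup>2 \<le> s" "s \<le> 16 * (g / real n)\<^sup>2"
    unfolding s_def g_def using sin_sq_cyclic_dist_bounds[OF assms(1,2)] by simp_all
  have n6: "real n ^ 6 * (g / real n)\<^sup>2 = real n ^ 4 * g\<^sup>2"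
    using n by (simp add: power_divide field_simps flip: power_add)
  have "0 \<le> s" unfolding s_def by simp
  then have y: "1 \<le> y" unfolding y_def S_def by simp
  have e: "exp (hdist (point i) (point j)) = exp (arcosh y)"
    unfolding hdist_point y_def S_def s_def ..
  have "2 * (real n ^ 6 / 16) * (g / real n)\<^sup>2 \<le> 2 * S * s"
    using S s by (intro mult_mono) auto
  then show "real n ^ 4 * g\<^sup>2 / 8 \<le> exp (hdist (point i) (point j))"
    unfolding e using exp_arcosh_bounds(1)[OF y] n6 unfolding y_def by simp
  have "2 * S * s \<le> 2 * (real n ^ 6 / 4) * (16 * (g / real n)\<^sup>2)"
    using S s \<open>0 \<le> s\<close> by (intro mult_mono) auto
  then have "2 * S * s \<le> 8 * real n ^ 4 * g\<^sup>2" using n6 by simp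
  then show "exp (hdist (point i) (point j)) \<le> 2 + 16 * real n ^ 4 * g\<^sup>2"
    unfolding e using exp_arcosh_bounds(2)[OF y] unfolding y_def by (simp add: algebra_simps)
qed

lemma exp_hdist_distinct_points:
  assumes "i < n" "j < n" "i \<noteq> j"
  shows "real n ^ 4 / 8 \<le> exp (hdist (point i) (point j))"
proof -
  have "1 \<le> real (cyclic_dist n i j)" using cyclic_dist_pos[OF assms] by simp
  then have "1 \<le> (real (cyclic_dist n i j))\<^sup>2" by (rule one_le_power)
  then have "real n ^ 4 * 1 / 8 \<le> real n ^ 4 * (real (cyclic_dist n i j))\<^sup>2 / 8"
    by (intro divide_right_mono mult_left_mono) auto
  with exp_hdist_point_bounds(1)[OF assms(1,2)] show ?thesis by simp
qed

lemma inj_on_point: "inj_on point {..<n}"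
proof (rule inj_onI, rule ccontr)
  fix i j assume "i \<in> {..<n}" "j \<in> {..<n}" "point i = point j" "i \<noteq> j"
  then have "real n ^ 4 / 8 \<le> 1" using exp_hdist_distinct_points[of i j] by simp
  moreover have "2 ^ 4 \<le> real n ^ 4" using two_le_n by (intro power_mono) auto
  ultimately show False by simp
qed

lemma two_hop_cyclic_dist_bound:
  assumes "i < n" "w < n" "j < n"
    and "exp (hdist (point i) (point w) + hdist (point w) (point j))
      \<le> 8748 * (real n ^ 4)\<^sup>2 * ((real (cyclic_dist n i j))\<^sup>2)\<^sup>2"
  shows "cyclic_dist n i w * cyclic_dist n w j \<le> 750 * (cyclic_dist n i j)\<^sup>2"
proof -
  define M where "M = real n ^ 4"
  define a where "a = real (cyclic_dist n i w)"
  define b where "b = real (cyclic_dist n w j)"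
  define g where "g = real (cyclic_dist n i j)"
  have "0 < M" unfolding M_def using two_le_n by simp
  have "(M * a\<^sup>2 / 8) * (M * b\<^sup>2 / 8) \<le> exp (hdist (point i) (point w)) * exp (hdist (point w) (point j))"
    using exp_hdist_point_bounds(1)[OF assms(1,2)] exp_hdist_point_bounds(1)[OF assms(2,3)]
    unfolding M_def a_def b_def by (intro mult_mono) auto
  also have "\<dots> \<le> 8748 * M\<^sup>2 * (g\<^sup>2)\<^sup>2"
    using assms(4) unfolding M_def g_def by (simp add: exp_add)
  finally have "M\<^sup>2 * (a * b)\<^sup>2 \<le> M\<^sup>2 * (559872 * (g\<^sup>2)\<^sup>2)"
    by (simp add: power2_eq_square algebra_simps)
  then have "(a * b)\<^sup>2 \<le> 559872 * (g\<^sup>2)\<^sup>2"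
    using \<open>0 < M\<close> by simp
  moreover have "0 \<le> (g\<^sup>2)\<^sup>2" by simp
  ultimately have "(a * b)\<^sup>2 \<le> 562500 * (g\<^sup>2)\<^sup>2" by linarith
  then have "(a * b)\<^sup>2 \<le> (750 * g\<^sup>2)\<^sup>2"
    by (simp add: power_mult_distrib)
  then have "a * b \<le> 750 * g\<^sup>2"
    by (rule power2_le_imp_le) simp
  then show ?thesis
    unfolding a_def b_def g_def by (simp flip: of_nat_mult of_nat_power)
qed

end

locale circle_spanner = circle_points +
  fixes \<epsilon> :: real and E :: "complex set set"
  assumes eps_nonneg: "0 \<le> \<epsilon>" and eps_le: "\<epsilon> \<le> 1 / (2 * ln (real n))"
    and spanner: "is_spanner (2 + \<epsilon>) (point ` {..<n}) E"
begin

lemma finite_edges: "finite E"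
  using finite_spanner_edges[OF spanner] by simp

lemma edgeE:
  assumes "{u, v} \<in> E"
  obtains i j where "i < n" "j < n" "i \<noteq> j" "u = point i" "v = point j"
  using spanner_edge[OF spanner assms] by blast

lemma ln_le_hdist_edge:
  assumes "{u, v} \<in> E"
  shows "ln (real n ^ 4 / 8) \<le> hdist u v"
proof -
  obtain i j where "i < n" "j < n" "i \<noteq> j" "u = point i" "v = point j"
    using edgeE[OF assms] .
  then have "real n ^ 4 / 8 \<le> exp (hdist u v)" using exp_hdist_distinct_points by simp
  moreover have "0 < real n ^ 4 / 8" using two_le_n by simp
  ultimately show ?thesis by (metis ln_exp ln_le_cancel_iff exp_gt_zero)
qed

lemma exp_stretch_le:
  assumes "i < n" "j < n" "i \<noteq> j" "(cyclic_dist n i j)\<^sup>2 \<le> n" "18 \<le> n"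
  defines "g \<equiv> real (cyclic_dist n i j)"
  shows "exp ((2 + \<epsilon>) * hdist (point i) (point j)) \<le> 27 * (18 * real n ^ 4 * g\<^sup>2)\<^sup>2"
proof -
  define d where "d = hdist (point i) (point j)"
  define B where "B = 18 * real n ^ 4 * g\<^sup>2"
  have "1 \<le> g" unfolding g_def using cyclic_dist_pos[OF assms(1-3)] by simp
  then have "1 \<le> g\<^sup>2" by (rule one_le_power)
  moreover have "1 \<le> real n ^ 4" using two_le_n by simp
  ultimately have "1 \<le> real n ^ 4 * g\<^sup>2"
    using mult_mono[of 1 "real n ^ 4" 1 "g\<^sup>2"] by simp
  then have exp_d: "exp d \<le> B"
    unfolding d_def B_def g_def using exp_hdist_point_bounds(2)[OF assms(1,2)] by simp
  have "g\<^sup>2 \<le> real n" unfolding g_def using assms(4) by (metis of_nat_le_iff of_nat_power)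
  then have "B \<le> real n * real n ^ 4 * real n"
    unfolding B_def using assms(5) by (intro mult_mono) auto
  also have "\<dots> = real n ^ 6" by (simp add: power_numeral_reduce)
  finally have "d \<le> ln (real n ^ 6)"
    using exp_d two_le_n by (subst ln_ge_iff) auto
  then have "d \<le> 6 * ln (real n)"
    using two_le_n by (simp add: ln_realpow)
  moreover have "0 \<le> d" "0 < ln (real n)"
    using exp_d \<open>1 \<le> real n ^ 4 * g\<^sup>2\<close> two_le_n
    unfolding d_def hdist_point by simp_all
  ultimately have "\<epsilon> * d \<le> 1 / (2 * ln (real n)) * (6 * ln (real n))"
    using eps_nonneg eps_le by (intro mult_mono) auto
  then have "exp (\<epsilon> * d) \<le> exp 3"
    using \<open>0 < ln (real n)\<close> by simp
  then have "exp (\<epsilon> * d) \<le> 27"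
    using exp_3_le_27 by linarith
  moreover have "exp ((2 + \<epsilon>) * d) = (exp d)\<^sup>2 * exp (\<epsilon> * d)"
    by (simp add: distrib_right exp_add exp_double)
  moreover have "(exp d)\<^sup>2 \<le> B\<^sup>2" using exp_d by (intro power_mono) auto
  ultimately show ?thesis unfolding d_def B_def
    by (metis (no_types, lifting) exp_ge_zero mult.commute mult_mono zero_le_power2)
qed

lemma exp_walk_length_ge:
  assumes "is_walk E xs"
  shows "(real n ^ 4 / 8) ^ (length xs - 1) \<le> exp (walk_length xs)"
proof -
  have "real (length xs - 1) * ln (real n ^ 4 / 8) \<le> walk_length xs"
    using walk_length_ge[OF assms] ln_le_hdist_edge by blast
  then have "exp (ln (real n ^ 4 / 8)) ^ (length xs - 1) \<le> exp (walk_length xs)"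
    by (simp flip: exp_of_nat_mult)
  then show ?thesis using two_le_n by simp
qed

lemma short_walk:
  assumes "18 \<le> n" "i < n" "j < n" "i \<noteq> j" "(cyclic_dist n i j)\<^sup>2 \<le> n"
  obtains xs where "is_walk E xs" "hd xs = point i" "last xs = point j"
    "exp (walk_length xs) \<le> 8748 * (real n ^ 4)\<^sup>2 * ((real (cyclic_dist n i j))\<^sup>2)\<^sup>2"
proof -
  obtain xs where walk: "is_walk E xs" "hd xs = point i" "last xs = point j"
    and "walk_length xs \<le> (2 + \<epsilon>) * hdist (point i) (point j)"
    using spanner_walk[OF spanner] assms(2,3) by blast
  then have "exp (walk_length xs) \<le> exp ((2 + \<epsilon>) * hdist (point i) (point j))"
    by simp
  also have "\<dots> \<le> 27 * (18 * real n ^ 4 * (real (cyclic_dist n i j))\<^sup>2)\<^sup>2"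
    by (rule exp_stretch_le[OF assms(2-5,1)])
  also have "\<dots> = 8748 * (real n ^ 4)\<^sup>2 * ((real (cyclic_dist n i j))\<^sup>2)\<^sup>2"
    by (simp add: power_mult_distrib)
  finally show thesis using that walk by blast
qed

lemma short_walk_length_le_3:
  assumes "3000 \<le> n" "is_walk E xs"
    and "exp (walk_length xs) \<le> 8748 * (real n ^ 4)\<^sup>2 * (real n)\<^sup>2"
  shows "length xs \<le> 3"
proof (rule ccontr)
  assume "\<not> length xs \<le> 3"
  define M where "M = real n ^ 4"
  have "3000\<^sup>2 * (real n)\<^sup>2 \<le> (real n)\<^sup>2 * (real n)\<^sup>2"
    using assms(1) by (intro mult_right_mono power_mono) auto
  then have M: "9000000 * (real n)\<^sup>2 \<le> M" unfolding M_def by (simp flip: power_add)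
  have "8 \<le> M" unfolding M_def using power_mono[of 2 "real n" 4] two_le_n by simp
  have "(M / 8) ^ 3 \<le> (M / 8) ^ (length xs - 1)"
    using \<open>\<not> length xs \<le> 3\<close> \<open>8 \<le> M\<close> by (intro power_increasing) auto
  also have "\<dots> \<le> 8748 * M\<^sup>2 * (real n)\<^sup>2"
    using exp_walk_length_ge[OF assms(2)] assms(3) unfolding M_def by linarith
  finally have "M\<^sup>2 * M \<le> M\<^sup>2 * (4478976 * (real n)\<^sup>2)"
    by (simp add: power3_eq_cube power2_eq_square algebra_simps)
  then have "M \<le> 4478976 * (real n)\<^sup>2"
    using \<open>8 \<le> M\<close> by simp
  moreover have "0 < (real n)\<^sup>2" using two_le_n by simp
  ultimately show False using M by linarith
qed

lemma edge_or_two_hop_path: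
  assumes "3000 \<le> n" "i < n" "j < n" "i \<noteq> j" "(cyclic_dist n i j)\<^sup>2 \<le> n"
  shows "{point i, point j} \<in> E \<or>
    (\<exists>w<n. {point i, point w} \<in> E \<and> {point w, point j} \<in> E \<and>
       cyclic_dist n i w * cyclic_dist n w j \<le> 750 * (cyclic_dist n i j)\<^sup>2)"
proof -
  obtain xs where walk: "is_walk E xs" "hd xs = point i" "last xs = point j"
    and short: "exp (walk_length xs)
      \<le> 8748 * (real n ^ 4)\<^sup>2 * ((real (cyclic_dist n i j))\<^sup>2)\<^sup>2"
    using short_walk[OF _ assms(2-5)] assms(1) by force
  have "(real (cyclic_dist n i j))\<^sup>2 \<le> real n"
    using assms(5) by (simp flip: of_nat_power)
  then have "8748 * (real n ^ 4)\<^sup>2 * ((real (cyclic_dist n i j))\<^sup>2)\<^sup>2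
      \<le> 8748 * (real n ^ 4)\<^sup>2 * (real n)\<^sup>2"
    by (intro mult_left_mono power_mono) simp_all
  with short have "exp (walk_length xs) \<le> 8748 * (real n ^ 4)\<^sup>2 * (real n)\<^sup>2"
    by linarith
  then have "length xs \<le> 3"
    by (rule short_walk_length_le_3[OF assms(1) walk(1)])
  have "point i \<noteq> point j"
    using inj_on_point assms(2-4) by (auto dest: inj_onD)
  with walk show ?thesis
  proof (cases rule: walk_cases)
    case (2 u)
    obtain w where w: "w < n" "u = point w"
      using edgeE[OF 2(1)] by metis
    have "cyclic_dist n i w * cyclic_dist n w j \<le> 750 * (cyclic_dist n i j)\<^sup>2"
      using two_hop_cyclic_dist_bound[OF assms(2) w(1) assms(3)] short 2(3) w(2) by simp
    then show ?thesis using 2 w by blast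
  qed (use \<open>length xs \<le> 3\<close> in auto)
qed

lemma half_block_crossing:
  assumes "3000 \<le> n" "1 \<le> h" "s + 256 * h \<le> n" "(2 * h)\<^sup>2 \<le> n"
  shows "(\<forall>x\<in>{s + 127 * h..<s + 128 * h}. \<exists>z\<in>{s + 128 * h..<s + 256 * h}. {point x, point z} \<in> E)
       \<or> (\<forall>y\<in>{s + 128 * h..<s + 129 * h}. \<exists>z\<in>{s..<s + 128 * h}. {point y, point z} \<in> E)"
proof (rule ccontr)
  assume "\<not> ?thesis"
  then obtain x y where x: "s + 127 * h \<le> x" "x < s + 128 * h"
      and no_x: "\<And>z. z \<in> {s + 128 * h..<s + 256 * h} \<Longrightarrow> {point x, point z} \<notin> E"
      and y: "s + 128 * h \<le> y" "y < s + 129 * h"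
      and no_y: "\<And>z. z \<in> {s..<s + 128 * h} \<Longrightarrow> {point y, point z} \<notin> E"
    by auto
  define k where "k = y - x"
  have "4 * h \<le> (2 * h)\<^sup>2" using assms(2) by (simp add: power2_eq_square)
  then have k: "0 < k" "2 * k < 4 * h" "4 * h \<le> n" using x y assms(4) unfolding k_def by auto
  have xy: "x < n" "y < n" "x \<noteq> y" using x y assms(3) by auto
  have dist_xy: "cyclic_dist n x y = k"
    unfolding k_def using x y k xy by (intro cyclic_dist_eq_diff) auto
  have "k\<^sup>2 \<le> (2 * h)\<^sup>2" using k by (intro power_mono) auto
  then have "(cyclic_dist n x y)\<^sup>2 \<le> n" using assms(4) dist_xy by simp
  from edge_or_two_hop_path[OF assms(1) xy this] show False
  proof
    assume "{point x, point y} \<in> E"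
    then show False using no_x y by auto
  next
    assume "\<exists>w<n. {point x, point w} \<in> E \<and> {point w, point y} \<in> E \<and>
      cyclic_dist n x w * cyclic_dist n w y \<le> 750 * (cyclic_dist n x y)\<^sup>2"
    then obtain w where w: "w < n" "{point x, point w} \<in> E" "{point w, point y} \<in> E"
      and prod: "cyclic_dist n x w * cyclic_dist n w y \<le> 750 * k\<^sup>2"
      using dist_xy by auto
    have "cyclic_dist n x w \<le> k + cyclic_dist n w y"
      using cyclic_dist_triangle[OF xy(1,2) w(1)] dist_xy by (simp add: cyclic_dist_commute)
    then have "cyclic_dist n x w \<le> 30 * k"
      using prod by (rule factor_le_of_mult_le)
    then have "cyclic_dist n x w < 60 * h" using k by simp
    then have "x < w + 60 * h" "w < x + 60 * h"
      using cyclic_dist_less_no_wrap[OF w(1)] x assms(3) by auto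
    then have "w \<in> {s..<s + 128 * h} \<or> w \<in> {s + 128 * h..<s + 256 * h}"
      using x by auto
    then show False
      using no_x no_y w(2,3) by (auto simp: insert_commute)
  qed
qed

definition crossing_edges :: "nat \<Rightarrow> nat \<Rightarrow> complex set set" where
  "crossing_edges j t = {e \<in> E. \<exists>x z. x < n \<and> z < n \<and> e = {point x, point z} \<and>
     x div 2 ^ (j + 1) = t \<and> z div 2 ^ (j + 1) = t \<and> x div 2 ^ j \<noteq> z div 2 ^ j}"

lemma crossing_edges_disjoint:
  assumes "e \<in> crossing_edges j t" "e \<in> crossing_edges j' t'"
  shows "j = j' \<and> t = t'"
proof -
  obtain x z where xz: "x < n" "z < n" "e = {point x, point z}" "x div 2 ^ (j + 1) = t"
      "z div 2 ^ (j + 1) = t" "x div 2 ^ j \<noteq> z div 2 ^ j"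
    using assms(1) unfolding crossing_edges_def by blast
  obtain x' z' where xz': "x' < n" "z' < n" "e = {point x', point z'}" "x' div 2 ^ (j' + 1) = t'"
      "z' div 2 ^ (j' + 1) = t'" "x' div 2 ^ j' \<noteq> z' div 2 ^ j'"
    using assms(2) unfolding crossing_edges_def by blast
  have "point ` {x, z} = point ` {x', z'}" using xz(3) xz'(3) by simp
  then have "{x, z} = {x', z'}"
    using inj_on_image_eq_iff[OF inj_on_point, of "{x, z}" "{x', z'}"] xz(1,2) xz'(1,2) by simp
  then have "x' div 2 ^ (j' + 1) = t' \<and> x div 2 ^ (j' + 1) = z div 2 ^ (j' + 1)
      \<and> x div 2 ^ j' \<noteq> z div 2 ^ j'"
    using xz' by (auto simp: doubleton_eq_iff)
  moreover from this have "j = j'"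
    using dyadic_split_level_unique[of x j z j'] xz(4-6) by simp
  ultimately show ?thesis using \<open>{x, z} = {x', z'}\<close> xz(4,5) by (auto simp: doubleton_eq_iff)
qed

lemma card_le_card_crossing_edges:
  assumes "B \<subseteq> {..<n}"
    and "\<And>a. a \<in> A \<Longrightarrow> \<exists>b\<in>B. {point a, point b} \<in> E"
    and "\<And>a. a \<in> A \<Longrightarrow> a < n \<and> a div 2 ^ (j + 1) = t \<and> a div 2 ^ j = c"
    and "\<And>b. b \<in> B \<Longrightarrow> b div 2 ^ (j + 1) = t \<and> b div 2 ^ j \<noteq> c"
  shows "card A \<le> card (crossing_edges j t)"
proof -
  obtain f where f: "\<And>a. a \<in> A \<Longrightarrow> f a \<in> B \<and> {point a, point (f a)} \<in> E"
    using assms(2) by metis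
  show ?thesis
  proof (rule card_inj_on_le)
    show "inj_on (\<lambda>a. {point a, point (f a)}) A"
    proof (rule inj_onI)
      fix a a' assume a: "a \<in> A" "a' \<in> A" and "{point a, point (f a)} = {point a', point (f a')}"
      then have "point a = point a' \<or> point a = point (f a')" by (auto simp: doubleton_eq_iff)
      then have "a = a' \<or> a = f a'"
        using inj_on_point assms(1,3) f a by (auto dest: inj_onD)
      then show "a = a'" using assms(3,4) f a by metis
    qed
    show "(\<lambda>a. {point a, point (f a)}) ` A \<subseteq> crossing_edges j t"
      unfolding crossing_edges_def using assms(1,3,4) f by fastforce
    show "finite (crossing_edges j t)"
      using finite_edges unfolding crossing_edges_def by simp
  qed
qed

lemma card_crossing_edges_ge:
  assumes "3000 \<le> n" "7 \<le> j" "4 ^ j \<le> n" "t < n div 2 ^ (j + 1)"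
  shows "2 ^ (j - 7) \<le> card (crossing_edges j t)"
proof -
  define h :: nat where "h = 2 ^ (j - 7)"
  define s where "s = t * 2 ^ (j + 1)"
  have two_pow_j: "(2::nat) ^ j = 128 * h"
    unfolding h_def using assms(2) by (rule power2_eq_128_mult)
  then have q: "(2::nat) ^ (j + 1) = 256 * h" by simp
  have "Suc t * (256 * h) \<le> n div (256 * h) * (256 * h)"
    using assms(4) unfolding q by (intro mult_right_mono) auto
  also have "\<dots> \<le> n" by (rule div_times_less_eq_dividend)
  finally have block: "s + 256 * h \<le> n" unfolding s_def q by (simp add: algebra_simps)
  have "(2 * h)\<^sup>2 \<le> 2 ^ j * 2 ^ j" unfolding two_pow_j by (simp add: power2_eq_square)
  also have "\<dots> = 4 ^ j" by (simp flip: power_mult_distrib)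
  finally have "(2 * h)\<^sup>2 \<le> n" using assms(3) by linarith
  have halves: "x div 2 ^ (j + 1) = t \<and> x div 2 ^ j = (if x < s + 128 * h then 2 * t else 2 * t + 1)"
    if "s \<le> x" "x < s + 256 * h" for x
    using div_double_block[of t "2 ^ j" x] that two_pow_j unfolding s_def by (simp add: mult.commute)
  from half_block_crossing[OF assms(1) _ block \<open>(2 * h)\<^sup>2 \<le> n\<close>]
  consider "\<forall>x\<in>{s + 127 * h..<s + 128 * h}. \<exists>z\<in>{s + 128 * h..<s + 256 * h}. {point x, point z} \<in> E"
    | "\<forall>y\<in>{s + 128 * h..<s + 129 * h}. \<exists>z\<in>{s..<s + 128 * h}. {point y, point z} \<in> E"
    unfolding h_def by auto
  then show ?thesis
  proof cases
    case 1
    have "card {s + 127 * h..<s + 128 * h} \<le> card (crossing_edges j t)"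
      using 1 halves block
      by (intro card_le_card_crossing_edges[where B = "{s + 128 * h..<s + 256 * h}" and c = "2 * t"]) auto
    then show ?thesis unfolding h_def by simp
  next
    case 2
    have "card {s + 128 * h..<s + 129 * h} \<le> card (crossing_edges j t)"
      using 2 halves block
      by (intro card_le_card_crossing_edges[where B = "{s..<s + 128 * h}" and c = "2 * t + 1"]) auto
    then show ?thesis unfolding h_def by simp
  qed
qed

lemma card_edges_ge_levels:
  assumes "3000 \<le> n" "7 \<le> J" "4 ^ J \<le> n"
  shows "(J - 6) * n \<le> 512 * card E"
proof -
  define I where "I = Sigma {7..J} (\<lambda>j. {..<n div 2 ^ (j + 1)})"
  define U where "U = case_prod crossing_edges"
  have "disjoint_family_on U I"
    unfolding disjoint_family_on_def U_def using crossing_edges_disjoint by fastforce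
  then have "(\<Sum>p\<in>I. card (U p)) = card (\<Union> (U ` I))"
    using finite_edges unfolding I_def U_def crossing_edges_def
    by (intro card_UN_disjoint'[symmetric]) auto
  also have "\<dots> \<le> card E"
    using finite_edges by (intro card_mono) (auto simp: U_def crossing_edges_def)
  finally have sum_le: "(\<Sum>p\<in>I. card (U p)) \<le> card E" .
  have "(\<Sum>p\<in>I. 2 ^ (fst p - 7)) \<le> (\<Sum>p\<in>I. card (U p))"
  proof (rule sum_mono)
    fix p assume "p \<in> I"
    then have "7 \<le> fst p" "fst p \<le> J" "snd p < n div 2 ^ (fst p + 1)" unfolding I_def by auto
    moreover have "(4::nat) ^ fst p \<le> 4 ^ J" using \<open>fst p \<le> J\<close> by (rule power_increasing) simp
    then have "4 ^ fst p \<le> n" using assms(3) by linarith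
    with \<open>7 \<le> fst p\<close> \<open>snd p < n div 2 ^ (fst p + 1)\<close> show "2 ^ (fst p - 7) \<le> card (U p)"
      unfolding U_def using card_crossing_edges_ge[OF assms(1)] by (simp add: split_beta)
  qed
  also have "(\<Sum>p\<in>I. (2::nat) ^ (fst p - 7))
      = (\<Sum>j=7..J. \<Sum>t<n div 2 ^ (j + 1). 2 ^ (j - 7))"
    unfolding I_def by (subst sum.Sigma) (auto simp: case_prod_beta)
  finally have "(\<Sum>j=7..J. n div 2 ^ (j + 1) * 2 ^ (j - 7)) \<le> card E"
    using sum_le by simp
  moreover have "n \<le> 512 * (n div 2 ^ (j + 1) * 2 ^ (j - 7))" if "j \<in> {7..J}" for j
  proof (rule le_512_mult_div_power2)
    have "(2::nat) ^ (j + 1) \<le> 4 ^ J"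
      using that power_increasing[of "j + 1" "2 * J" "2::nat"] by (simp add: power_mult)
    then show "2 ^ (j + 1) \<le> n" using assms(3) by linarith
  qed (use that in simp)
  then have "(\<Sum>j=7..J. n) \<le> 512 * (\<Sum>j=7..J. n div 2 ^ (j + 1) * 2 ^ (j - 7))"
    unfolding sum_distrib_left by (rule sum_mono)
  ultimately show ?thesis using assms(2) by simp
qed

lemma n_ln_n_le_card_edges: "real n * ln (real n) \<le> 10 ^ 16 * real (card E)"
proof (cases "n < 4 ^ 13")
  case True
  have "point 0 \<in> point ` {..<n}" "point 1 \<in> point ` {..<n}" using two_le_n by auto
  moreover have "point 0 \<noteq> point 1" using inj_on_point two_le_n by (auto dest: inj_onD)
  ultimately have "E \<noteq> {}" by (rule spanner_edges_nonempty[OF spanner])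
  then have "1 \<le> real (card E)" using finite_edges by (simp add: Suc_le_eq card_gt_0_iff)
  have "real n * ln (real n) \<le> real n * real n"
    using two_le_n ln_le_minus_one[of "real n"] by (intro mult_left_mono) auto
  also have "\<dots> \<le> 4 ^ 13 * 4 ^ 13"
    using True by (intro mult_mono) simp_all
  finally show ?thesis using \<open>1 \<le> real (card E)\<close> by simp
next
  case False
  obtain J where J: "4 ^ J \<le> n" "n < 4 ^ (J + 1)"
    using ex_power_ivl1[of 4 n] two_le_n by auto
  have "13 \<le> J"
  proof (rule ccontr)
    assume "\<not> 13 \<le> J"
    then have "(4::nat) ^ (J + 1) \<le> 4 ^ 13" by (intro power_increasing) auto
    then show False using J(2) False by linarith
  qed
  have "(J - 6) * n \<le> 512 * card E"
    using card_edges_ge_levels[OF _ _ J(1)] \<open>13 \<le> J\<close> False by simp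
  then have "real ((J - 6) * n) \<le> real (512 * card E)"
    by (simp only: of_nat_le_iff)
  then have count: "(real J - 6) * real n \<le> 512 * real (card E)"
    using \<open>13 \<le> J\<close> by (simp add: of_nat_diff)
  have "real n < real (4 ^ (J + 1))" using J(2) by (simp only: of_nat_less_iff)
  then have "ln (real n) < ln (4 ^ (J + 1))" using two_le_n by simp
  also have "\<dots> = real (J + 1) * ln 4" by (rule ln_realpow)
  also have "\<dots> \<le> real (J + 1) * 3"
    using ln_le_minus_one[of 4] by (intro mult_left_mono) auto
  finally have "ln (real n) \<le> 6 * (real J - 6)" using \<open>13 \<le> J\<close> by simp
  then have "real n * ln (real n) \<le> real n * (6 * (real J - 6))"
    by (intro mult_left_mono) simp_all
  then show ?thesis using count by (simp add: algebra_simps)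
qed

end

theorem mainTheorem6:
  shows "\<exists>c>0. \<forall>(n::nat) (\<epsilon>::real) (r::real) (\<alpha>::real) (E::complex set set).
           n \<ge> 2 \<longrightarrow> 0 \<le> \<epsilon> \<longrightarrow> \<epsilon> \<le> 1 / (2 * ln (real n)) \<longrightarrow>
           0 \<le> r \<longrightarrow> r < 1 \<longrightarrow> hdist 0 (complex_of_real r) = 3 * ln (real n) \<longrightarrow>
           is_spanner (2 + \<epsilon>)
             ((\<lambda>k. complex_of_real r * cis (\<alpha> + 2 * pi * real k / real n)) ` {..<n}) E \<longrightarrow>
           c * real n * ln (real n) \<le> real (card E)"
proof (intro exI[of _ "1 / 10 ^ 16"] conjI allI impI)
  fix n :: nat and \<epsilon> r \<alpha> :: real and E :: "complex set set"
  assume "n \<ge> 2" "0 \<le> \<epsilon>" "\<epsilon> \<le> 1 / (2 * ln (real n))" "0 \<le> r" "r < 1"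
    and "hdist 0 (complex_of_real r) = 3 * ln (real n)"
    and spanner: "is_spanner (2 + \<epsilon>)
      ((\<lambda>k. complex_of_real r * cis (\<alpha> + 2 * pi * real k / real n)) ` {..<n}) E"
  then interpret circle_points n r \<alpha>
    by unfold_locales
  have "point = (\<lambda>k. complex_of_real r * cis (\<alpha> + 2 * pi * real k / real n))"
    by (simp add: point_def[abs_def])
  with spanner \<open>0 \<le> \<epsilon>\<close> \<open>\<epsilon> \<le> 1 / (2 * ln (real n))\<close>
  interpret circle_spanner n r \<alpha> \<epsilon> E
    by unfold_locales simp_all
  show "1 / 10 ^ 16 * real n * ln (real n) \<le> real (card E)"
    using n_ln_n_le_card_edges by simp
qed simp

end
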